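(* Let $S=(S_n)_{n\in\mathbb N}$ be the simple random walk on $\mathbb Z^d$ started at $0$, on $(\Sigma,\mathcal E,\mathbf P)$, and let $\eta=(\eta(n,x))_{(n,x)\in\mathbb N\times\mathbb Z^d}$ be i.i.d. non-constant real random variables on $(\Omega,\mathcal F,\mathbb P)$. Let $\beta>0$, assume $\mathbb E e^{\beta|\eta(0,0)|}<\infty$, and let $\lambda(s)=\ln\mathbb E e^{s\eta(0,0)}$. Let $H_n(S)=\sum_{j=1}^n\eta(j,S_j)$. Let $n\ge1$, let $f_n$ be a bounded nonnegative function on $\mathbb R^d$ with $\mathbf P(f_n(S_n)>0)\ne0$, and $Y_n=\mathbf E\big[f_n(S_n)e^{\beta H_n(S)}\big]$. Let $\mathcal F_0$ be trivial, $\mathcal F_j=\sigma(\eta(i,x):1\le i\le j,\ x\in\mathbb Z^d)$, $\mathbb E_j=\mathbb E(\cdot\mid\mathcal F_j)$ and $V_{n,j}=\mathbb E_j\ln Y_n-\mathbb E_{j-1}\ln Y_n$. Then for every $1\le j\le n$, $$\mathbb E_{j-1}\exp(|V_{n,j}|)\le K:=2\exp(\lambda(\beta)+\lambda(-\beta))\quad\text{a.s.}$$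
   Context: $\mathbf E$ is expectation with respect to $\mathbf P$ (walk, environment fixed), $\mathbb E$ with respect to $\mathbb P$ (environment). *)

theory Defs
  imports "HOL-Probability.Probability"
begin

definition srw_steps :: "(int ^ 'd) set" where
  "srw_steps = {v. \<exists>i. v = axis i 1 \<or> v = axis i (-1)}"

definition srw_paths :: "nat \<Rightarrow> (int ^ 'd::finite) list pmf" where
  "srw_paths n = pmf_of_set {xs. length xs = n \<and> set xs \<subseteq> srw_steps}"

definition srw_pos :: "(int ^ 'd) list \<Rightarrow> nat \<Rightarrow> int ^ 'd" where
  "srw_pos xs j = sum_list (take j xs)"

definition emb :: "int ^ 'd \<Rightarrow> real ^ 'd" where
  "emb z = (\<chi> i. real_of_int (z $ i))"

definition Hn :: "(nat \<Rightarrow> int ^ 'd \<Rightarrow> 'a \<Rightarrow> real) \<Rightarrow> nat \<Rightarrow> (int ^ 'd) list \<Rightarrow> 'a \<Rightarrow> real" where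
  "Hn \<eta> n xs \<omega> = (\<Sum>j = 1..n. \<eta> j (srw_pos xs j) \<omega>)"

definition Yn :: "(nat \<Rightarrow> int ^ 'd::finite \<Rightarrow> 'a \<Rightarrow> real) \<Rightarrow> real \<Rightarrow> (real ^ 'd \<Rightarrow> real) \<Rightarrow> nat \<Rightarrow> 'a \<Rightarrow> real" where
  "Yn \<eta> \<beta> f n \<omega> = measure_pmf.expectation (srw_paths n)
      (\<lambda>xs. f (emb (srw_pos xs n)) * exp (\<beta> * Hn \<eta> n xs \<omega>))"

definition envF :: "'a measure \<Rightarrow> (nat \<Rightarrow> int ^ 'd \<Rightarrow> 'a \<Rightarrow> real) \<Rightarrow> nat \<Rightarrow> 'a measure" where
  "envF M \<eta> j = sigma (space M)
     (\<Union>i\<in>{1..j}. \<Union>x. {\<eta> i x -` A \<inter> space M | A. A \<in> sets borel})"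

definition lam :: "'a measure \<Rightarrow> (nat \<Rightarrow> int ^ 'd \<Rightarrow> 'a \<Rightarrow> real) \<Rightarrow> real \<Rightarrow> real" where
  "lam M \<eta> s = ln (\<integral>\<omega>. exp (s * \<eta> 0 0 \<omega>) \<partial>M)"

end

theory Submission
  imports Defs
begin

text \<open>Fix the layer \<open>j\<close> and split \<open>\<beta> H\<^sub>n\<close> into the term \<open>\<beta> \<eta>(j, S\<^sub>j)\<close> and the rest.
  Then \<open>Y\<^sub>n = W \<cdot> \<Sum>\<^sub>p q\<^sub>p e\<^bsup>\<beta> \<eta>(j, S\<^sub>j(p))\<^esup>\<close>, where \<open>W\<close> and the Gibbs weights \<open>q\<^sub>p\<close>
  (summing to 1) only depend on the layers \<open>i \<noteq> j\<close>. As layer \<open>j\<close> is independent of all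
  other layers, \<open>\<bbbE>\<^sub>j ln W = \<bbbE>\<^sub>j\<^sub>-\<^sub>1 ln W\<close>, so \<open>V\<^sub>n\<^sub>,\<^sub>j = a - b\<close> with \<open>a, b\<close> the
  conditional expectations given \<open>\<F>\<^sub>j\<close> and \<open>\<F>\<^sub>j\<^sub>-\<^sub>1\<close> of \<open>D = ln \<Sum>\<^sub>p q\<^sub>p e\<^bsup>\<beta> \<eta>(j, S\<^sub>j(p))\<^esup>\<close>.
  Now \<open>e\<^bsup>|a - b|\<^esup> \<le> e\<^bsup>a - b\<^esup> + e\<^bsup>b - a\<^esup>\<close>, Jensen's inequality bounds \<open>e\<^bsup>\<plusminus>a\<^esup>\<close> and
  \<open>e\<^bsup>\<plusminus>b\<^esup>\<close> by \<open>\<bbbE>\<^sub>j\<^sub>-\<^sub>1 e\<^bsup>\<plusminus>D\<^esup>\<close>, and by independence \<open>\<bbbE>\<^sub>j\<^sub>-\<^sub>1 e\<^bsup>D\<^esup> = e\<^bsup>\<lambda>(\<beta>)\<^esup>\<close>,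
  while Jensen for \<open>t \<mapsto> 1/t\<close> gives \<open>\<bbbE>\<^sub>j\<^sub>-\<^sub>1 e\<^bsup>-D\<^esup> \<le> \<bbbE>\<^sub>j\<^sub>-\<^sub>1 \<Sum>\<^sub>p q\<^sub>p e\<^bsup>-\<beta> \<eta>(j, S\<^sub>j(p))\<^esup> = e\<^bsup>\<lambda>(-\<beta>)\<^esup>\<close>.\<close>

section \<open>Integrals and independence\<close>

lemma
  fixes g :: "'b :: topological_space \<Rightarrow> real"
  assumes "distr M borel X = distr M borel Y" "X \<in> borel_measurable M" "Y \<in> borel_measurable M"
    and "g \<in> borel_measurable borel"
  shows integrable_comp_eq_of_distr_eq: "integrable M (\<lambda>x. g (X x)) \<longleftrightarrow> integrable M (\<lambda>x. g (Y x))"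
    and integral_comp_eq_of_distr_eq: "(\<integral>x. g (X x) \<partial>M) = (\<integral>x. g (Y x) \<partial>M)"
  using integrable_distr_eq[of X M borel g] integrable_distr_eq[of Y M borel g]
    integral_distr[of X M borel g] integral_distr[of Y M borel g] assms
  by simp_all

lemma integrable_exp_mult_of_exp_abs:
  fixes X :: "'a \<Rightarrow> real"
  assumes "X \<in> borel_measurable M" "integrable M (\<lambda>x. exp (\<beta> * \<bar>X x\<bar>))" "\<bar>s\<bar> \<le> \<beta>"
  shows "integrable M (\<lambda>x. exp (s * X x))"
proof (rule Bochner_Integration.integrable_bound[OF assms(2)])
  have "s * X x \<le> \<beta> * \<bar>X x\<bar>" for x
    using abs_ge_self[of "s * X x"] mult_right_mono[OF assms(3) abs_ge_zero[of "X x"]] by (simp add: abs_mult)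
  then show "AE x in M. norm (exp (s * X x)) \<le> norm (exp (\<beta> * \<bar>X x\<bar>))" by simp
qed (use assms(1) in measurable)

lemma integrable_of_exp_abs:
  fixes X :: "'a \<Rightarrow> real"
  assumes "X \<in> borel_measurable M" "integrable M (\<lambda>x. exp (\<beta> * \<bar>X x\<bar>))" "0 < \<beta>"
  shows "integrable M X"
proof (rule Bochner_Integration.integrable_bound)
  show "integrable M (\<lambda>x. exp (\<beta> * \<bar>X x\<bar>) / \<beta>)" using assms(2) by simp
  have "\<beta> * \<bar>X x\<bar> \<le> exp (\<beta> * \<bar>X x\<bar>)" for x
    using exp_ge_add_one_self[of "\<beta> * \<bar>X x\<bar>"] by linarith
  then show "AE x in M. norm (X x) \<le> norm (exp (\<beta> * \<bar>X x\<bar>) / \<beta>)"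
    using assms(3) by (simp add: field_simps)
qed (use assms(1) in measurable)

lemma set_integral_eq_on_sigma_sets:
  fixes f g :: "'a \<Rightarrow> real"
  assumes E: "Int_stable E" "E \<subseteq> sets M" and S: "S \<in> sigma_sets (space M) E"
    and f: "integrable M f" and g: "integrable M g"
    and whole: "(\<integral>x. f x \<partial>M) = (\<integral>x. g x \<partial>M)"
    and generator: "\<And>T. T \<in> E \<Longrightarrow> (\<integral>x\<in>T. f x \<partial>M) = (\<integral>x\<in>T. g x \<partial>M)"
  shows "(\<integral>x\<in>S. f x \<partial>M) = (\<integral>x\<in>S. g x \<partial>M)"
proof -
  have sets: "T \<in> sets M" if "T \<in> sigma_sets (space M) E" for T
    using that sets.sigma_sets_subset[OF E(2)] by blast
  have set_integrable: "set_integrable M T h" if "T \<in> sets M" "integrable M h" for T and h :: "'a \<Rightarrow> real"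
    using integrable_mult_indicator[OF that] by (simp add: set_integrable_def)
  have complement: "(\<integral>x\<in>space M - T. h x \<partial>M) = (\<integral>x. h x \<partial>M) - (\<integral>x\<in>T. h x \<partial>M)"
    if "T \<in> sets M" "integrable M h" for T and h :: "'a \<Rightarrow> real"
  proof -
    have "(\<integral>x\<in>(space M - T) \<union> T. h x \<partial>M) = (\<integral>x\<in>space M - T. h x \<partial>M) + (\<integral>x\<in>T. h x \<partial>M)"
      using that by (intro set_integral_Un set_integrable) auto
    moreover have "(space M - T) \<union> T = space M" using sets.sets_into_space[OF that(1)] by blast
    ultimately show ?thesis using set_integral_space[OF that(2)] by simp
  qed
  have "E \<subseteq> Pow (space M)" using E(2) sets.sets_into_space by blast
  from E(1) this S show ?thesis
  proof (induction rule: sigma_sets_induct_disjoint)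
    case (compl T)
    then show ?case using complement[OF sets[OF compl(1)] f] complement[OF sets[OF compl(1)] g] whole
      by simp
  next
    case (union T)
    have "\<And>i. T i \<in> sets M" "(\<Union>i. T i) \<in> sets M" using union(2) sets by auto
    moreover have "\<And>i j. i \<noteq> j \<Longrightarrow> T i \<inter> T j = {}" using union(1) by (auto simp: disjoint_family_on_def)
    ultimately show ?case
      using lebesgue_integral_countable_add[of T M, OF _ _ set_integrable[OF _ f]]
        lebesgue_integral_countable_add[of T M, OF _ _ set_integrable[OF _ g]] union(3)
      by simp
  qed (use generator in \<open>auto simp: set_lebesgue_integral_def\<close>)
qed

lemma (in prob_space) indep_var_of_indep_set:
  assumes "indep_set (sets S) (sets T)" "subalgebra M S" "subalgebra M T"
    and "X \<in> borel_measurable S" "Y \<in> borel_measurable T"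
  shows "indep_var borel X borel (Y :: _ \<Rightarrow> real)"
proof -
  have generated_subset: "sigma_sets (space M) {Z -` B \<inter> space M | B. B \<in> sets borel} \<subseteq> sets N"
    if "subalgebra M N" "Z \<in> borel_measurable N" for N and Z :: "_ \<Rightarrow> real"
  proof -
    have sp: "space N = space M" using that(1) by (simp add: subalgebra_def)
    have "{Z -` B \<inter> space M | B. B \<in> sets borel} \<subseteq> sets N"
      using that(2) sp by (auto simp: measurable_sets[of _ N, unfolded sp])
    from sets.sigma_sets_subset[OF this] show ?thesis unfolding sp .
  qed
  show ?thesis
    using assms generated_subset[OF assms(2,4)] generated_subset[OF assms(3,5)]
      measurable_from_subalg[OF assms(2,4)] measurable_from_subalg[OF assms(3,5)]
    unfolding indep_var_eq indep_set_def
    by (auto elim!: indep_sets_mono_sets split: bool.split) blast+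
qed

section \<open>Conditional expectations\<close>

context sigma_finite_subalgebra
begin

lemma nn_cond_exp_ennreal_eq_real_cond_exp:
  assumes "integrable M h" "\<And>x. 0 \<le> h x"
  shows "AE x in M. nn_cond_exp M F (\<lambda>x. ennreal (h x)) x = ennreal (real_cond_exp M F h x)"
proof -
  have [measurable]: "h \<in> borel_measurable M" using assms(1) by auto
  have "(\<integral>\<^sup>+x. nn_cond_exp M F (\<lambda>x. ennreal (h x)) x \<partial>M) = (\<integral>\<^sup>+x. ennreal (h x) \<partial>M)"
    using nn_cond_exp_intg[of "\<lambda>_. 1" "\<lambda>x. ennreal (h x)"] by simp
  also have "\<dots> < \<infinity>" using integrableD(2)[OF assms(1)] assms(2) by (simp add: less_top)
  finally have "AE x in M. nn_cond_exp M F (\<lambda>x. ennreal (h x)) x \<noteq> \<infinity>"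
    by (intro nn_integral_PInf_AE) auto
  moreover have "AE x in M. 0 = nn_cond_exp M F (\<lambda>x. 0) x"
    by (rule nn_cond_exp_F_meas) simp
  moreover have "(\<lambda>x. ennreal (- h x)) = (\<lambda>x. 0)" using assms(2) by (auto intro!: ext ennreal_neg)
  ultimately show ?thesis unfolding real_cond_exp_def
    by (elim AE_mp) (auto intro!: AE_I2 simp: ennreal_enn2real_if)
qed

lemma exp_real_cond_exp_le:
  assumes "integrable M X" "integrable M (\<lambda>x. exp (X x))"
  shows "AE x in M. exp (real_cond_exp M F X x) \<le> real_cond_exp M F (\<lambda>x. exp (X x)) x"
  using real_cond_exp_jensens_inequality(2)[of X UNIV, OF assms(1) _ _ assms(2) exp_convex] by auto

lemma real_cond_exp_uminus:
  assumes "integrable M X"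
  shows "AE x in M. real_cond_exp M F (\<lambda>x. - X x) x = - real_cond_exp M F X x"
  using real_cond_exp_cmult[OF assms, of "-1"] by simp

lemma nn_cond_exp_exp_abs_diff_le:
  assumes [measurable]: "a \<in> borel_measurable M" "b \<in> borel_measurable F"
  shows "AE x in M. nn_cond_exp M F (\<lambda>x. ennreal (exp \<bar>a x - b x\<bar>)) x
    \<le> ennreal (exp (- b x)) * nn_cond_exp M F (\<lambda>x. ennreal (exp (a x))) x
      + ennreal (exp (b x)) * nn_cond_exp M F (\<lambda>x. ennreal (exp (- a x))) x"
proof -
  have [measurable]: "b \<in> borel_measurable M" by (rule measurable_from_subalg[OF subalg]) measurable
  have "exp \<bar>t\<bar> \<le> exp t + exp (- t)" for t :: real
    by (cases "t \<ge> 0") (simp_all add: add_increasing2 add_increasing)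
  from this[of "a x - b x" for x]
  have "AE x in M. ennreal (exp \<bar>a x - b x\<bar>)
      \<le> ennreal (exp (- b x)) * ennreal (exp (a x)) + ennreal (exp (b x)) * ennreal (exp (- a x))"
    by (intro AE_I2) (simp add: ennreal_mult[symmetric] ennreal_plus[symmetric] mult_exp_exp
        del: ennreal_plus)
  then have "AE x in M. nn_cond_exp M F (\<lambda>x. ennreal (exp \<bar>a x - b x\<bar>)) x \<le> nn_cond_exp M F
      (\<lambda>x. ennreal (exp (- b x)) * ennreal (exp (a x)) + ennreal (exp (b x)) * ennreal (exp (- a x))) x"
    by (rule nn_cond_exp_mono) simp_all
  moreover have "AE x in M. nn_cond_exp M F
      (\<lambda>x. ennreal (exp (- b x)) * ennreal (exp (a x)) + ennreal (exp (b x)) * ennreal (exp (- a x))) x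
    = nn_cond_exp M F (\<lambda>x. ennreal (exp (- b x)) * ennreal (exp (a x))) x
      + nn_cond_exp M F (\<lambda>x. ennreal (exp (b x)) * ennreal (exp (- a x))) x"
    by (rule AE_symmetric, rule nn_cond_exp_sum) simp_all
  moreover have "AE x in M. ennreal (exp (- b x)) * nn_cond_exp M F (\<lambda>x. ennreal (exp (a x))) x
      = nn_cond_exp M F (\<lambda>x. ennreal (exp (- b x)) * ennreal (exp (a x))) x"
    by (rule nn_cond_exp_prod) simp_all
  moreover have "AE x in M. ennreal (exp (b x)) * nn_cond_exp M F (\<lambda>x. ennreal (exp (- a x))) x
      = nn_cond_exp M F (\<lambda>x. ennreal (exp (b x)) * ennreal (exp (- a x))) x"
    by (rule nn_cond_exp_prod) simp_all
  ultimately show ?thesis by eventually_elim simp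
qed

end

context prob_space
begin

lemma sigma_finite_subalgebra_of_subalgebra:
  "subalgebra M F \<Longrightarrow> sigma_finite_subalgebra M F"
  by (rule finite_measure_subalgebra_is_sigma_finite) (unfold_locales, assumption)

lemma nn_cond_exp_exp_real_cond_exp_le:
  assumes sub: "subalgebra M G" "subalgebra M F" "subalgebra F G"
    and X: "integrable M X" "integrable M (\<lambda>x. exp (X x))"
  shows "AE x in M. nn_cond_exp M G (\<lambda>x. ennreal (exp (real_cond_exp M F X x))) x
    \<le> ennreal (real_cond_exp M G (\<lambda>x. exp (X x)) x)"
proof -
  interpret F: sigma_finite_subalgebra M F by (rule sigma_finite_subalgebra_of_subalgebra) fact
  interpret G: sigma_finite_subalgebra M G by (rule sigma_finite_subalgebra_of_subalgebra) fact
  have [measurable]: "X \<in> borel_measurable M" using X(1) by auto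
  have "AE x in M. ennreal (exp (real_cond_exp M F X x)) \<le> nn_cond_exp M F (\<lambda>x. ennreal (exp (X x))) x"
    using F.exp_real_cond_exp_le[OF X] F.nn_cond_exp_ennreal_eq_real_cond_exp[OF X(2) exp_ge_zero]
    by eventually_elim (simp add: ennreal_leI)
  then have "AE x in M. nn_cond_exp M G (\<lambda>x. ennreal (exp (real_cond_exp M F X x))) x
      \<le> nn_cond_exp M G (nn_cond_exp M F (\<lambda>x. ennreal (exp (X x)))) x"
    by (rule G.nn_cond_exp_mono) simp_all
  moreover have "AE x in M. nn_cond_exp M G (\<lambda>x. ennreal (exp (X x))) x
      = nn_cond_exp M G (nn_cond_exp M F (\<lambda>x. ennreal (exp (X x)))) x"
    by (rule G.nn_cond_exp_nested_subalg[OF sub(2,3)]) simp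
  moreover note G.nn_cond_exp_ennreal_eq_real_cond_exp[OF X(2) exp_ge_zero]
  ultimately show ?thesis by eventually_elim simp
qed

lemma nn_cond_exp_exp_abs_real_cond_exp_diff_le:
  assumes sub: "subalgebra M G" "subalgebra M F" "subalgebra F G"
    and X: "integrable M X" "integrable M (\<lambda>x. exp (X x))" "integrable M (\<lambda>x. exp (- X x))"
    and K: "AE x in M. real_cond_exp M G (\<lambda>x. exp (X x)) x \<le> K\<^sub>1"
      "AE x in M. real_cond_exp M G (\<lambda>x. exp (- X x)) x \<le> K\<^sub>2"
  shows "AE x in M. nn_cond_exp M G
      (\<lambda>x. ennreal (exp \<bar>real_cond_exp M F X x - real_cond_exp M G X x\<bar>)) x \<le> ennreal (2 * K\<^sub>1 * K\<^sub>2)"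
proof -
  interpret F: sigma_finite_subalgebra M F by (rule sigma_finite_subalgebra_of_subalgebra) fact
  interpret G: sigma_finite_subalgebra M G by (rule sigma_finite_subalgebra_of_subalgebra) fact
  have mX: "integrable M (\<lambda>x. - X x)" using X(1) by simp
  have "AE x in M. nn_cond_exp M G (\<lambda>x. ennreal (exp (- real_cond_exp M F X x))) x
      = nn_cond_exp M G (\<lambda>x. ennreal (exp (real_cond_exp M F (\<lambda>x. - X x) x))) x"
    using F.real_cond_exp_uminus[OF X(1)] by (intro G.nn_cond_exp_cong) (auto elim!: AE_mp)
  moreover note nn_cond_exp_exp_real_cond_exp_le[OF sub X(1,2)]
    nn_cond_exp_exp_real_cond_exp_le[OF sub mX X(3)]
    G.exp_real_cond_exp_le[OF X(1,2)] G.exp_real_cond_exp_le[OF mX X(3)] G.real_cond_exp_uminus[OF X(1)]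
    G.nn_cond_exp_exp_abs_diff_le[OF borel_measurable_cond_exp2[of M F X] borel_measurable_cond_exp[of M G X]]
  ultimately show ?thesis using K
  proof eventually_elim
    case (elim x)
    let ?a = "real_cond_exp M F X x" and ?b = "real_cond_exp M G X x"
    have b: "exp ?b \<le> K\<^sub>1" "exp (- ?b) \<le> K\<^sub>2" using elim(4-6,8,9) by simp_all
    have "nn_cond_exp M G (\<lambda>x. ennreal (exp \<bar>real_cond_exp M F X x - real_cond_exp M G X x\<bar>)) x
        \<le> ennreal (exp (- ?b)) * nn_cond_exp M G (\<lambda>x. ennreal (exp (real_cond_exp M F X x))) x
          + ennreal (exp ?b) * nn_cond_exp M G (\<lambda>x. ennreal (exp (- real_cond_exp M F X x))) x"
      using elim(7) by simp
    also have "\<dots> \<le> ennreal K\<^sub>2 * ennreal K\<^sub>1 + ennreal K\<^sub>1 * ennreal K\<^sub>2"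
      using elim(1-3,8,9) b
      by (intro add_mono mult_mono ennreal_leI) (auto elim!: order_trans intro: ennreal_leI)
    also have "\<dots> = ennreal (2 * K\<^sub>1 * K\<^sub>2)"
      using b order_trans[OF exp_ge_zero] by (simp add: ennreal_mult[symmetric] ennreal_plus[symmetric] del: ennreal_plus)
    finally show ?case .
  qed
qed

end

text \<open>In the application \<open>G = \<F>\<^sub>j\<^sub>-\<^sub>1\<close>, \<open>A\<close> is generated by the layer \<open>j\<close>, \<open>H\<close> by all other
  layers, and \<open>F = G \<or> A = \<F>\<^sub>j\<close>.\<close>
locale indep_extension = prob_space M for M :: "'a measure" +
  fixes G H A F :: "'a measure"
  assumes subalgebra_G: "subalgebra M G" and subalgebra_H: "subalgebra M H"
    and subalgebra_A: "subalgebra M A" and subalgebra_F: "subalgebra M F"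
    and sets_G_subset_H: "sets G \<subseteq> sets H"
    and indep_H_A: "indep_set (sets H) (sets A)"
    and sets_F_eq: "sets F = sigma_sets (space M) {g \<inter> a | g a. g \<in> sets G \<and> a \<in> sets A}"
begin

sublocale G: sigma_finite_subalgebra M G
  by (rule sigma_finite_subalgebra_of_subalgebra) (rule subalgebra_G)

sublocale F: sigma_finite_subalgebra M F
  by (rule sigma_finite_subalgebra_of_subalgebra) (rule subalgebra_F)

lemma space_eq: "space G = space M" "space H = space M" "space A = space M" "space F = space M"
  using subalgebra_G subalgebra_H subalgebra_A subalgebra_F by (simp_all add: subalgebra_def)

lemma subalgebra_F_G: "subalgebra F G"
proof -
  have "g \<in> sets F" if "g \<in> sets G" for g
  proof -
    have "g = g \<inter> space M" using sets.sets_into_space[OF that] space_eq by blast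
    then show ?thesis
      unfolding sets_F_eq using that sets.top[of A] space_eq by (auto intro!: sigma_sets.Basic)
  qed
  then show ?thesis by (auto simp: subalgebra_def space_eq)
qed

lemma measurable_H_of_G: "u \<in> borel_measurable G \<Longrightarrow> u \<in> borel_measurable H"
  using measurable_mono[of borel borel G H] sets_G_subset_H space_eq by auto

lemma indep_var_H_A:
  "u \<in> borel_measurable H \<Longrightarrow> v \<in> borel_measurable A \<Longrightarrow> indep_var borel u borel (v :: 'a \<Rightarrow> real)"
  by (rule indep_var_of_indep_set[OF indep_H_A subalgebra_H subalgebra_A])

lemma set_integral_Int_indep:
  assumes u: "u \<in> borel_measurable H" "integrable M u" and g: "g \<in> sets H" and a: "a \<in> sets A"
  shows "(\<integral>x\<in>g \<inter> a. u x \<partial>M) = (\<integral>x\<in>g. u x \<partial>M) * prob a"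
proof -
  have [measurable]: "g \<in> sets H" "a \<in> sets A" by fact+
  have "g \<in> sets M" "a \<in> sets M"
    using g a subalgebra_H subalgebra_A by (auto simp: subalgebra_def)
  have "(\<integral>x\<in>g \<inter> a. u x \<partial>M) = (\<integral>x. (indicator g x * u x) * indicator a x \<partial>M)"
    unfolding set_lebesgue_integral_def by (intro Bochner_Integration.integral_cong) (auto simp: indicator_def)
  also have "\<dots> = (\<integral>x. indicator g x * u x \<partial>M) * (\<integral>x. indicator a x \<partial>M)"
    using u integrable_mult_indicator[OF \<open>g \<in> sets M\<close> u(2)] \<open>a \<in> sets M\<close>
    by (intro indep_var_lebesgue_integral indep_var_H_A) (auto simp: less_top[symmetric])
  finally show ?thesis
    using a subalgebra_A by (simp add: set_lebesgue_integral_def subalgebra_def subset_iff)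
qed

lemma real_cond_exp_F_eq_G:
  assumes u: "u \<in> borel_measurable H" "integrable M u"
  shows "AE x in M. real_cond_exp M F u x = real_cond_exp M G u x"
proof (rule F.real_cond_exp_charact)
  let ?w = "real_cond_exp M G u"
  have w: "?w \<in> borel_measurable H" "integrable M ?w"
    using measurable_H_of_G[OF borel_measurable_cond_exp] G.real_cond_exp_int(1)[OF u(2)] by auto
  show "?w \<in> borel_measurable F"
    by (rule measurable_from_subalg[OF subalgebra_F_G borel_measurable_cond_exp])
  fix S assume "S \<in> sets F"
  show "(\<integral>x\<in>S. u x \<partial>M) = (\<integral>x\<in>S. ?w x \<partial>M)"
  proof (rule set_integral_eq_on_sigma_sets[OF _ _ _ u(2) w(2)])
    show "S \<in> sigma_sets (space M) {g \<inter> a | g a. g \<in> sets G \<and> a \<in> sets A}"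
      using \<open>S \<in> sets F\<close> by (simp add: sets_F_eq)
    show "Int_stable {g \<inter> a | g a. g \<in> sets G \<and> a \<in> sets A}"
      unfolding Int_stable_def
    proof clarify
      fix g a g' a' assume "g \<in> sets G" "a \<in> sets A" "g' \<in> sets G" "a' \<in> sets A"
      then show "\<exists>g'' a''. g \<inter> a \<inter> (g' \<inter> a') = g'' \<inter> a'' \<and> g'' \<in> sets G \<and> a'' \<in> sets A"
        by (intro exI[of _ "g \<inter> g'"] exI[of _ "a \<inter> a'"]) auto
    qed
    show "{g \<inter> a | g a. g \<in> sets G \<and> a \<in> sets A} \<subseteq> events"
      using subalgebra_G subalgebra_A by (auto simp: subalgebra_def)
    show "(\<integral>x. u x \<partial>M) = (\<integral>x. ?w x \<partial>M)" using G.real_cond_exp_int(2)[OF u(2)] by simp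
    fix T assume "T \<in> {g \<inter> a | g a. g \<in> sets G \<and> a \<in> sets A}"
    then obtain g a where "T = g \<inter> a" "g \<in> sets G" "a \<in> sets A" by blast
    then show "(\<integral>x\<in>T. u x \<partial>M) = (\<integral>x\<in>T. ?w x \<partial>M)"
      using set_integral_Int_indep[OF u] set_integral_Int_indep[OF w] G.real_cond_exp_intA[OF u(2)]
        sets_G_subset_H by auto
  qed
qed (use u in auto)

lemma real_cond_exp_mult_indep:
  assumes u: "u \<in> borel_measurable H" "integrable M u"
    and v: "v \<in> borel_measurable A" "integrable M v"
  shows "AE x in M. real_cond_exp M G (\<lambda>x. u x * v x) x = real_cond_exp M G u x * (\<integral>x. v x \<partial>M)"
proof (rule G.real_cond_exp_charact)
  show "integrable M (\<lambda>x. u x * v x)" by (rule indep_var_integrable[OF indep_var_H_A[OF u(1) v(1)] u(2) v(2)])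
  show "integrable M (\<lambda>x. real_cond_exp M G u x * (\<integral>x. v x \<partial>M))"
    using G.real_cond_exp_int(1)[OF u(2)] by simp
  fix S assume S: "S \<in> sets G"
  then have [measurable]: "S \<in> sets H" using sets_G_subset_H by auto
  have "S \<in> sets M" using S subalgebra_G by (auto simp: subalgebra_def)
  have "(\<integral>x\<in>S. u x * v x \<partial>M) = (\<integral>x. (indicator S x * u x) * v x \<partial>M)"
    unfolding set_lebesgue_integral_def by (simp add: mult.assoc)
  also have "\<dots> = (\<integral>x\<in>S. u x \<partial>M) * (\<integral>x. v x \<partial>M)"
    using u v integrable_mult_indicator[OF \<open>S \<in> sets M\<close> u(2)]
    by (subst indep_var_lebesgue_integral[OF indep_var_H_A]) (simp_all add: set_lebesgue_integral_def)
  also have "\<dots> = (\<integral>x\<in>S. real_cond_exp M G u x * (\<integral>x. v x \<partial>M) \<partial>M)"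
    using G.real_cond_exp_intA[OF u(2) S] by (simp add: set_lebesgue_integral_def mult.assoc)
  finally show "(\<integral>x\<in>S. u x * v x \<partial>M) = (\<integral>x\<in>S. real_cond_exp M G u x * (\<integral>x. v x \<partial>M) \<partial>M)" .
qed simp

lemma real_cond_exp_sum_mult_indep:
  fixes q v :: "'p \<Rightarrow> 'a \<Rightarrow> real"
  assumes "finite P"
    and q: "\<And>p. q p \<in> borel_measurable H" "\<And>p. integrable M (q p)" "\<And>x. (\<Sum>p\<in>P. q p x) = 1"
    and v: "\<And>p. v p \<in> borel_measurable A" "\<And>p. integrable M (v p)" "\<And>p. p \<in> P \<Longrightarrow> (\<integral>x. v p x \<partial>M) = m"
  shows "AE x in M. real_cond_exp M G (\<lambda>x. \<Sum>p\<in>P. q p x * v p x) x = m"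
proof -
  have "AE x in M. real_cond_exp M G (\<lambda>x. \<Sum>p\<in>P. q p x * v p x) x
      = (\<Sum>p\<in>P. real_cond_exp M G (\<lambda>x. q p x * v p x) x)"
    using indep_var_integrable[OF indep_var_H_A[OF q(1) v(1)] q(2) v(2)] by (rule G.real_cond_exp_sum)
  moreover have "AE x in M. \<forall>p\<in>P. real_cond_exp M G (\<lambda>x. q p x * v p x) x = real_cond_exp M G (q p) x * m"
  proof (intro AE_finite_allI[OF \<open>finite P\<close>])
    fix p assume "p \<in> P"
    show "AE x in M. real_cond_exp M G (\<lambda>x. q p x * v p x) x = real_cond_exp M G (q p) x * m"
      using real_cond_exp_mult_indep[OF q(1,2) v(1,2), of p p] v(3)[OF \<open>p \<in> P\<close>] by simp
  qed
  moreover have "AE x in M. real_cond_exp M G (\<lambda>x. \<Sum>p\<in>P. q p x) x = (\<Sum>p\<in>P. real_cond_exp M G (q p) x)"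
    using q(2) by (rule G.real_cond_exp_sum)
  moreover have "AE x in M. real_cond_exp M G (\<lambda>x. 1) x = 1"
    by (rule G.real_cond_exp_F_meas) simp_all
  ultimately show ?thesis
    by eventually_elim (simp add: q(3) sum_distrib_right[symmetric])
qed

end

section \<open>Log-partition functions over an independent layer\<close>

lemma sum_mult_exp_pos:
  fixes c r :: "'p \<Rightarrow> real"
  assumes "finite P" "\<And>p. p \<in> P \<Longrightarrow> 0 \<le> c p" "0 < sum c P"
  shows "0 < (\<Sum>p\<in>P. c p * exp (r p))"
proof -
  obtain p where "p \<in> P" "0 < c p"
    using assms(2,3) sum_nonpos[of P c] by (metis linorder_not_less order_antisym_conv)
  then show ?thesis using assms(1,2) by (intro sum_pos2[of P p]) auto
qed

lemma abs_ln_sum_mult_exp_minus_ln_sum_le: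
  fixes c r :: "'p \<Rightarrow> real"
  assumes "finite P" "\<And>p. p \<in> P \<Longrightarrow> 0 \<le> c p" "0 < sum c P"
  shows "\<bar>ln (\<Sum>p\<in>P. c p * exp (r p)) - ln (sum c P)\<bar> \<le> (\<Sum>p\<in>P. \<bar>r p\<bar>)"
proof -
  define T where "T = (\<Sum>p\<in>P. \<bar>r p\<bar>)"
  define S where "S = (\<Sum>p\<in>P. c p * exp (r p))"
  have abs_le: "\<bar>r p\<bar> \<le> T" if "p \<in> P" for p
    unfolding T_def by (rule member_le_sum[OF that _ assms(1)]) simp
  have "- T \<le> r p" "r p \<le> T" if "p \<in> P" for p
    using abs_le[OF that] by (simp_all add: abs_le_iff)
  then have "c p * exp (- T) \<le> c p * exp (r p)" "c p * exp (r p) \<le> c p * exp T" if "p \<in> P" for p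
    using that assms(2)[OF that] by (simp_all add: mult_left_mono)
  then have "sum c P * exp (- T) \<le> S" "S \<le> sum c P * exp T"
    unfolding S_def sum_distrib_right by (simp_all add: sum_mono)
  moreover have "0 < S" unfolding S_def by (rule sum_mult_exp_pos[OF assms])
  ultimately have "ln (sum c P) - T \<le> ln S" "ln S \<le> ln (sum c P) + T"
    using assms(3) by (simp_all add: ln_mult flip: ln_le_cancel_iff)
  then show ?thesis unfolding S_def T_def by linarith
qed

lemma inverse_sum_mult_le_sum_mult_inverse:
  fixes q g :: "'p \<Rightarrow> real"
  assumes "finite P" "P \<noteq> {}" "\<And>p. p \<in> P \<Longrightarrow> 0 \<le> q p" "sum q P = 1" "\<And>p. p \<in> P \<Longrightarrow> 0 < g p"
  shows "inverse (\<Sum>p\<in>P. q p * g p) \<le> (\<Sum>p\<in>P. q p * inverse (g p))"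
  using convex_on_sum[OF assms(1,2) convex_on_inverse[of "{0<..}"] assms(4), of g] assms by simp

text \<open>\<open>P\<close> is a finite set of paths with weights \<open>c\<close>, and \<open>R p\<close>, \<open>Z p\<close> are the energies collected
  by the path \<open>p\<close> outside the layer and in the layer.\<close>
locale partition_layer = indep_extension +
  fixes P :: "'p set" and c :: "'p \<Rightarrow> real" and R Z :: "'p \<Rightarrow> 'a \<Rightarrow> real"
  assumes finite_P: "finite P" and c_nonneg: "\<And>p. p \<in> P \<Longrightarrow> 0 \<le> c p" and sum_c_pos: "0 < sum c P"
    and R_measurable [measurable]: "\<And>p. R p \<in> borel_measurable H"
    and integrable_R: "\<And>p. integrable M (R p)"
    and Z_measurable [measurable]: "\<And>p. Z p \<in> borel_measurable A"
    and integrable_Z: "\<And>p. integrable M (Z p)"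
    and integrable_exp_Z: "\<And>p. integrable M (\<lambda>x. exp (Z p x))"
    and integrable_exp_uminus_Z: "\<And>p. integrable M (\<lambda>x. exp (- Z p x))"
begin

definition partition_function :: "'a \<Rightarrow> real" where
  "partition_function x = (\<Sum>p\<in>P. c p * exp (R p x + Z p x))"

definition partition_function_rest :: "'a \<Rightarrow> real" where
  "partition_function_rest x = (\<Sum>p\<in>P. c p * exp (R p x))"

definition gibbs_weight :: "'p \<Rightarrow> 'a \<Rightarrow> real" where
  "gibbs_weight p x = (if p \<in> P then c p * exp (R p x) / partition_function_rest x else 0)"

definition gibbs_avg :: "('p \<Rightarrow> 'a \<Rightarrow> real) \<Rightarrow> 'a \<Rightarrow> real" where
  "gibbs_avg v x = (\<Sum>p\<in>P. gibbs_weight p x * v p x)"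

definition layer_term :: "'a \<Rightarrow> real" where
  "layer_term x = ln (gibbs_avg (\<lambda>p x. exp (Z p x)) x)"

lemma partition_function_rest_pos: "0 < partition_function_rest x"
  unfolding partition_function_rest_def using finite_P c_nonneg sum_c_pos by (rule sum_mult_exp_pos)

lemma gibbs_weight_nonneg: "0 \<le> gibbs_weight p x"
  unfolding gibbs_weight_def using c_nonneg partition_function_rest_pos[of x] by simp

lemma gibbs_weight_le_one: "gibbs_weight p x \<le> 1"
proof (cases "p \<in> P")
  case True
  then have "c p * exp (R p x) \<le> partition_function_rest x"
    unfolding partition_function_rest_def using c_nonneg by (intro member_le_sum finite_P) simp_all
  then show ?thesis unfolding gibbs_weight_def using partition_function_rest_pos[of x] by simp
qed (simp add: gibbs_weight_def)

lemma sum_gibbs_weight: "(\<Sum>p\<in>P. gibbs_weight p x) = 1"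
  using partition_function_rest_pos[of x]
  by (simp add: gibbs_weight_def partition_function_rest_def flip: sum_divide_distrib)

lemma gibbs_avg_exp_pos: "0 < gibbs_avg (\<lambda>p x. exp (s * Z p x)) x"
  unfolding gibbs_avg_def using finite_P gibbs_weight_nonneg sum_gibbs_weight
  by (intro sum_mult_exp_pos) simp_all

lemma partition_function_eq: "partition_function x = partition_function_rest x * gibbs_avg (\<lambda>p x. exp (Z p x)) x"
  using partition_function_rest_pos[of x]
  by (simp add: partition_function_def gibbs_avg_def gibbs_weight_def sum_distrib_left exp_add mult.assoc)

lemma ln_partition_function_eq: "ln (partition_function x) = ln (partition_function_rest x) + layer_term x"
  using partition_function_rest_pos[of x] gibbs_avg_exp_pos[of 1 x]
  by (simp add: partition_function_eq layer_term_def ln_mult)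

lemma measurable_partition_function_rest [measurable]: "partition_function_rest \<in> borel_measurable H"
  unfolding partition_function_rest_def by measurable

lemma measurable_gibbs_weight [measurable]: "gibbs_weight p \<in> borel_measurable H"
  unfolding gibbs_weight_def by (cases "p \<in> P") simp_all

lemma borel_measurable_M [measurable]:
  "R p \<in> borel_measurable M" "Z p \<in> borel_measurable M"
  "partition_function_rest \<in> borel_measurable M" "gibbs_weight p \<in> borel_measurable M"
  by (rule measurable_from_subalg[OF subalgebra_H] measurable_from_subalg[OF subalgebra_A], measurable)+

lemma integrable_gibbs_weight: "integrable M (gibbs_weight p)"
  using gibbs_weight_nonneg gibbs_weight_le_one by (intro integrable_const_bound[where B=1]) auto

lemma integrable_gibbs_avg:
  assumes "\<And>p. integrable M (v p)"
  shows "integrable M (gibbs_avg v)"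
  unfolding gibbs_avg_def
proof (intro Bochner_Integration.integrable_sum)
  fix p
  have [measurable]: "v p \<in> borel_measurable M" using assms by auto
  show "integrable M (\<lambda>x. gibbs_weight p x * v p x)"
    using gibbs_weight_nonneg gibbs_weight_le_one
    by (intro Bochner_Integration.integrable_bound[OF assms[of p]] AE_I2)
      (simp_all add: abs_mult mult_left_le_one_le)
qed

lemma integrable_ln_partition_function_rest: "integrable M (\<lambda>x. ln (partition_function_rest x))"
proof (rule Bochner_Integration.integrable_bound)
  show "integrable M (\<lambda>x. \<bar>ln (sum c P)\<bar> + (\<Sum>p\<in>P. \<bar>R p x\<bar>))"
    using integrable_R by simp
  show "AE x in M. norm (ln (partition_function_rest x)) \<le> norm (\<bar>ln (sum c P)\<bar> + (\<Sum>p\<in>P. \<bar>R p x\<bar>))"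
  proof (rule AE_I2)
    fix x
    have "\<bar>ln (partition_function_rest x) - ln (sum c P)\<bar> \<le> (\<Sum>p\<in>P. \<bar>R p x\<bar>)"
      unfolding partition_function_rest_def by (rule abs_ln_sum_mult_exp_minus_ln_sum_le[OF finite_P c_nonneg sum_c_pos])
    then show "norm (ln (partition_function_rest x)) \<le> norm (\<bar>ln (sum c P)\<bar> + (\<Sum>p\<in>P. \<bar>R p x\<bar>))"
      by (simp add: sum_nonneg)
  qed
qed simp

lemma measurable_layer_term [measurable]: "layer_term \<in> borel_measurable M"
  unfolding layer_term_def gibbs_avg_def by measurable

lemma integrable_layer_term: "integrable M layer_term"
proof (rule Bochner_Integration.integrable_bound)
  show "integrable M (\<lambda>x. \<Sum>p\<in>P. \<bar>Z p x\<bar>)" using integrable_Z by simp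
  show "AE x in M. norm (layer_term x) \<le> norm (\<Sum>p\<in>P. \<bar>Z p x\<bar>)"
  proof (rule AE_I2)
    fix x
    have "\<bar>layer_term x - ln 1\<bar> \<le> (\<Sum>p\<in>P. \<bar>Z p x\<bar>)"
      using abs_ln_sum_mult_exp_minus_ln_sum_le[OF finite_P, of "\<lambda>p. gibbs_weight p x" "\<lambda>p. Z p x"]
      by (simp add: layer_term_def gibbs_avg_def sum_gibbs_weight gibbs_weight_nonneg)
    then show "norm (layer_term x) \<le> norm (\<Sum>p\<in>P. \<bar>Z p x\<bar>)" by simp
  qed
qed measurable

lemma exp_layer_term: "exp (layer_term x) = gibbs_avg (\<lambda>p x. exp (Z p x)) x"
  using gibbs_avg_exp_pos[of 1 x] by (simp add: layer_term_def)

lemma exp_uminus_layer_term_le: "exp (- layer_term x) \<le> gibbs_avg (\<lambda>p x. exp (- Z p x)) x"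
proof -
  have "P \<noteq> {}" using sum_c_pos by auto
  then show ?thesis
    using inverse_sum_mult_le_sum_mult_inverse[OF finite_P _ gibbs_weight_nonneg sum_gibbs_weight,
        of "\<lambda>p. exp (Z p x)"]
    by (simp add: exp_minus exp_layer_term gibbs_avg_def)
qed

lemma real_cond_exp_gibbs_avg:
  assumes "\<And>p. v p \<in> borel_measurable A" "\<And>p. integrable M (v p)" "\<And>p. p \<in> P \<Longrightarrow> (\<integral>x. v p x \<partial>M) = m"
  shows "AE x in M. real_cond_exp M G (gibbs_avg v) x = m"
  unfolding gibbs_avg_def
  by (rule real_cond_exp_sum_mult_indep[OF finite_P measurable_gibbs_weight integrable_gibbs_weight
        sum_gibbs_weight assms])

lemma real_cond_exp_ln_partition_function_diff:
  "AE x in M. real_cond_exp M F (\<lambda>x. ln (partition_function x)) x - real_cond_exp M G (\<lambda>x. ln (partition_function x)) x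
    = real_cond_exp M F layer_term x - real_cond_exp M G layer_term x"
proof -
  have "(\<lambda>x. ln (partition_function x)) = (\<lambda>x. ln (partition_function_rest x) + layer_term x)"
    by (simp add: ln_partition_function_eq)
  moreover have "AE x in M. real_cond_exp M F (\<lambda>x. ln (partition_function_rest x)) x
      = real_cond_exp M G (\<lambda>x. ln (partition_function_rest x)) x"
    using integrable_ln_partition_function_rest by (intro real_cond_exp_F_eq_G) measurable
  ultimately show ?thesis
    using F.real_cond_exp_add[OF integrable_ln_partition_function_rest integrable_layer_term]
      G.real_cond_exp_add[OF integrable_ln_partition_function_rest integrable_layer_term]
    by (elim AE_mp) (auto intro!: AE_I2)
qed

lemma integrable_exp_layer_term: "integrable M (\<lambda>x. exp (layer_term x))"
  using integrable_gibbs_avg[OF integrable_exp_Z] by (simp add: exp_layer_term)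

lemma integrable_exp_uminus_layer_term: "integrable M (\<lambda>x. exp (- layer_term x))"
proof (rule Bochner_Integration.integrable_bound[OF integrable_gibbs_avg[OF integrable_exp_uminus_Z]])
  show "AE x in M. norm (exp (- layer_term x)) \<le> norm (gibbs_avg (\<lambda>p x. exp (- Z p x)) x)"
    using exp_uminus_layer_term_le by (intro AE_I2) (simp, meson abs_ge_self order_trans)
qed measurable

lemma real_cond_exp_exp_layer_term:
  assumes "\<And>p. p \<in> P \<Longrightarrow> (\<integral>x. exp (Z p x) \<partial>M) = K"
  shows "AE x in M. real_cond_exp M G (\<lambda>x. exp (layer_term x)) x = K"
proof -
  have "AE x in M. real_cond_exp M G (gibbs_avg (\<lambda>p x. exp (Z p x))) x = K"
    by (rule real_cond_exp_gibbs_avg[OF _ integrable_exp_Z assms]) measurable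
  then show ?thesis by (simp add: exp_layer_term)
qed

lemma real_cond_exp_exp_uminus_layer_term_le:
  assumes "\<And>p. p \<in> P \<Longrightarrow> (\<integral>x. exp (- Z p x) \<partial>M) = K"
  shows "AE x in M. real_cond_exp M G (\<lambda>x. exp (- layer_term x)) x \<le> K"
proof -
  have "AE x in M. real_cond_exp M G (gibbs_avg (\<lambda>p x. exp (- Z p x))) x = K"
    by (rule real_cond_exp_gibbs_avg[OF _ integrable_exp_uminus_Z assms]) measurable
  then show ?thesis
    using G.real_cond_exp_mono[OF AE_I2[OF exp_uminus_layer_term_le] integrable_exp_uminus_layer_term
        integrable_gibbs_avg[OF integrable_exp_uminus_Z]]
    by (elim AE_mp) (auto intro!: AE_I2)
qed

theorem nn_cond_exp_exp_abs_ln_partition_function_increment_le: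
  assumes "\<And>p. p \<in> P \<Longrightarrow> (\<integral>x. exp (Z p x) \<partial>M) = K\<^sub>1" "\<And>p. p \<in> P \<Longrightarrow> (\<integral>x. exp (- Z p x) \<partial>M) = K\<^sub>2"
  shows "AE x in M. nn_cond_exp M G (\<lambda>x. ennreal (exp \<bar>real_cond_exp M F (\<lambda>x. ln (partition_function x)) x
      - real_cond_exp M G (\<lambda>x. ln (partition_function x)) x\<bar>)) x \<le> ennreal (2 * K\<^sub>1 * K\<^sub>2)"
proof -
  have "AE x in M. real_cond_exp M G (\<lambda>x. exp (layer_term x)) x = K\<^sub>1"
    using assms(1) by (rule real_cond_exp_exp_layer_term)
  then have "AE x in M. real_cond_exp M G (\<lambda>x. exp (layer_term x)) x \<le> K\<^sub>1"
    by (elim AE_mp) (auto intro!: AE_I2)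
  moreover have "AE x in M. real_cond_exp M G (\<lambda>x. exp (- layer_term x)) x \<le> K\<^sub>2"
    using assms(2) by (rule real_cond_exp_exp_uminus_layer_term_le)
  ultimately have "AE x in M. nn_cond_exp M G (\<lambda>x. ennreal (exp \<bar>real_cond_exp M F layer_term x
      - real_cond_exp M G layer_term x\<bar>)) x \<le> ennreal (2 * K\<^sub>1 * K\<^sub>2)"
    by (intro nn_cond_exp_exp_abs_real_cond_exp_diff_le subalgebra_G subalgebra_F subalgebra_F_G
        integrable_layer_term integrable_exp_layer_term integrable_exp_uminus_layer_term)
  moreover have "AE x in M. nn_cond_exp M G (\<lambda>x. ennreal (exp \<bar>real_cond_exp M F (\<lambda>x. ln (partition_function x)) x
      - real_cond_exp M G (\<lambda>x. ln (partition_function x)) x\<bar>)) x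
    = nn_cond_exp M G (\<lambda>x. ennreal (exp \<bar>real_cond_exp M F layer_term x - real_cond_exp M G layer_term x\<bar>)) x"
    using real_cond_exp_ln_partition_function_diff by (intro G.nn_cond_exp_cong) (auto elim: AE_mp)
  ultimately show ?thesis by eventually_elim simp
qed

end

section \<open>The directed polymer\<close>

definition layer_sigma :: "'a measure \<Rightarrow> (nat \<Rightarrow> int ^ 'd \<Rightarrow> 'a \<Rightarrow> real) \<Rightarrow> nat set \<Rightarrow> 'a measure" where
  "layer_sigma M \<eta> L = sigma (space M) (\<Union>i\<in>L. \<Union>x. {\<eta> i x -` B \<inter> space M | B. B \<in> sets borel})"

lemma envF_eq_layer_sigma: "envF M \<eta> j = layer_sigma M \<eta> {1..j}"
  by (simp add: envF_def layer_sigma_def)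

context
  fixes M :: "'a measure" and \<eta> :: "nat \<Rightarrow> int ^ 'd \<Rightarrow> 'a \<Rightarrow> real"
  assumes measurable_eta: "\<And>i x. \<eta> i x \<in> borel_measurable M"
begin

lemma sets_layer_sigma:
  "sets (layer_sigma M \<eta> L) = sigma_sets (space M) (\<Union>i\<in>L. \<Union>x. {\<eta> i x -` B \<inter> space M | B. B \<in> sets borel})"
  unfolding layer_sigma_def by (rule sets_measure_of) auto

lemma space_layer_sigma: "space (layer_sigma M \<eta> L) = space M"
  unfolding layer_sigma_def by (rule space_measure_of) auto

lemma subalgebra_layer_sigma: "subalgebra M (layer_sigma M \<eta> L)"
proof -
  have "(\<Union>i\<in>L. \<Union>x. {\<eta> i x -` B \<inter> space M | B. B \<in> sets borel}) \<subseteq> sets M"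
    using measurable_eta by (auto simp: measurable_sets)
  then show ?thesis
    unfolding subalgebra_def space_layer_sigma sets_layer_sigma by (simp add: sets.sigma_sets_subset)
qed

lemma measurable_layer_sigma: "i \<in> L \<Longrightarrow> \<eta> i x \<in> borel_measurable (layer_sigma M \<eta> L)"
  using measurable_eta
  by (intro measurableI) (auto simp: measurable_space sets_layer_sigma space_layer_sigma intro!: sigma_sets.Basic)

lemma sets_layer_sigma_mono: "L \<subseteq> L' \<Longrightarrow> sets (layer_sigma M \<eta> L) \<subseteq> sets (layer_sigma M \<eta> L')"
  unfolding sets_layer_sigma by (rule sigma_sets_mono') auto

lemma sets_layer_sigma_Un:
  "sets (layer_sigma M \<eta> (L \<union> L'))
    = sigma_sets (space M) {g \<inter> a | g a. g \<in> sets (layer_sigma M \<eta> L) \<and> a \<in> sets (layer_sigma M \<eta> L')}"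
    (is "_ = sigma_sets _ ?E")
proof
  have "?E \<subseteq> sets (layer_sigma M \<eta> (L \<union> L'))"
    using sets_layer_sigma_mono[of L "L \<union> L'"] sets_layer_sigma_mono[of L' "L \<union> L'"] by blast
  from sets.sigma_sets_subset[OF this]
  show "sigma_sets (space M) ?E \<subseteq> sets (layer_sigma M \<eta> (L \<union> L'))" by (simp add: space_layer_sigma)
  have generator: "S \<in> ?E" if "S \<in> (\<Union>i\<in>L \<union> L'. \<Union>x. {\<eta> i x -` B \<inter> space M | B. B \<in> sets borel})" for S
  proof -
    have top: "space M \<in> sets (layer_sigma M \<eta> L)" "space M \<in> sets (layer_sigma M \<eta> L')"
      using sets.top[of "layer_sigma M \<eta> _"] by (auto simp: space_layer_sigma)
    from that obtain i where "i \<in> L \<or> i \<in> L'"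
      "S \<in> (\<Union>x. {\<eta> i x -` B \<inter> space M | B. B \<in> sets borel})" by blast
    then have "S \<in> sets (layer_sigma M \<eta> L) \<or> S \<in> sets (layer_sigma M \<eta> L')" "S \<subseteq> space M"
      unfolding sets_layer_sigma by (auto intro: sigma_sets.Basic)
    then show ?thesis using top by (blast intro: Int_absorb1[symmetric] Int_absorb2[symmetric])
  qed
  then show "sets (layer_sigma M \<eta> (L \<union> L')) \<subseteq> sigma_sets (space M) ?E"
    unfolding sets_layer_sigma[of "L \<union> L'"] by (intro sigma_sets_mono subsetI sigma_sets.Basic generator)
qed

lemma indep_set_layer_sigma:
  assumes "prob_space M" and indep: "prob_space.indep_vars M (\<lambda>_. borel) (\<lambda>(i, x). \<eta> i x) UNIV"
    and "L \<inter> L' = {}"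
  shows "prob_space.indep_set M (sets (layer_sigma M \<eta> L)) (sets (layer_sigma M \<eta> L'))"
proof -
  interpret prob_space M by fact
  define E where "E ix = {(\<lambda>(i, x). \<eta> i x) ix -` B \<inter> space M | B. B \<in> sets borel}" for ix
  define I where "I b = (if b then L \<times> UNIV else L' \<times> (UNIV :: (int ^ 'd) set))" for b
  have "indep_sets E UNIV" using indep unfolding indep_vars_def2 E_def by simp
  have "indep_sets (\<lambda>b. sigma_sets (space M) (\<Union>ix\<in>I b. E ix)) UNIV"
  proof (intro indep_sets_collect_sigma)
    show "indep_sets E (\<Union>b\<in>UNIV. I b)" by (rule indep_sets_mono_index[OF _ \<open>indep_sets E UNIV\<close>]) simp
    show "disjoint_family_on I UNIV" using \<open>L \<inter> L' = {}\<close> unfolding disjoint_family_on_def I_def by auto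
    show "Int_stable (E ix)" for ix
      unfolding Int_stable_def E_def
    proof clarify
      fix B B' :: "real set" assume "B \<in> sets borel" "B' \<in> sets borel"
      then show "\<exists>C. (\<lambda>(i, x). \<eta> i x) ix -` B \<inter> space M \<inter> ((\<lambda>(i, x). \<eta> i x) ix -` B' \<inter> space M)
          = (\<lambda>(i, x). \<eta> i x) ix -` C \<inter> space M \<and> C \<in> sets borel"
        by (intro exI[of _ "B \<inter> B'"]) auto
    qed
  qed
  moreover have "sigma_sets (space M) (\<Union>ix\<in>I b. E ix)
      = (case b of True \<Rightarrow> sets (layer_sigma M \<eta> L) | False \<Rightarrow> sets (layer_sigma M \<eta> L'))" for b
    unfolding sets_layer_sigma I_def E_def by (cases b; simp; rule arg_cong[where f="sigma_sets _"]; force)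
  ultimately show ?thesis unfolding indep_set_def by simp
qed

end

lemma indep_extension_layer_sigma:
  assumes "prob_space M" and measurable_eta: "\<And>i x. \<eta> i x \<in> borel_measurable M"
    and indep: "prob_space.indep_vars M (\<lambda>_. borel) (\<lambda>(i, x). \<eta> i x) UNIV" and "1 \<le> j"
  shows "indep_extension M (envF M \<eta> (j - 1)) (layer_sigma M \<eta> (- {j})) (layer_sigma M \<eta> {j}) (envF M \<eta> j)"
proof -
  interpret prob_space M by fact
  have "{1..j} = {1..j - 1} \<union> {j}" using \<open>1 \<le> j\<close> by auto
  show ?thesis
    unfolding envF_eq_layer_sigma
  proof unfold_locales
    show "sets (layer_sigma M \<eta> {1..j - 1}) \<subseteq> sets (layer_sigma M \<eta> (- {j}))"
      by (rule sets_layer_sigma_mono[OF measurable_eta]) auto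
    show "indep_set (sets (layer_sigma M \<eta> (- {j}))) (sets (layer_sigma M \<eta> {j}))"
      by (rule indep_set_layer_sigma[OF measurable_eta assms(1) indep]) auto
    show "sets (layer_sigma M \<eta> {1..j}) = sigma_sets (space M)
        {g \<inter> a |g a. g \<in> sets (layer_sigma M \<eta> {1..j - 1}) \<and> a \<in> sets (layer_sigma M \<eta> {j})}"
      unfolding \<open>{1..j} = {1..j - 1} \<union> {j}\<close> by (rule sets_layer_sigma_Un[OF measurable_eta])
  qed (rule subalgebra_layer_sigma[OF measurable_eta])+
qed

lemma finite_set_srw_paths: "finite (set_pmf (srw_paths n :: (int ^ 'd::finite) list pmf))"
proof -
  have "(srw_steps :: (int ^ 'd) set) = range (\<lambda>i. axis i 1) \<union> range (\<lambda>i. axis i (-1))"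
    unfolding srw_steps_def by auto
  then have "finite (srw_steps :: (int ^ 'd) set)" by (metis finite_Un finite_imageI finite_class.finite_UNIV)
  from finite_lists_length_eq[OF this, of n]
  have "finite {xs :: (int ^ 'd) list. length xs = n \<and> set xs \<subseteq> srw_steps}"
    by (simp add: conj_commute)
  moreover have "replicate n (axis undefined 1) \<in> {xs. length xs = n \<and> set xs \<subseteq> srw_steps}"
    unfolding srw_steps_def by auto
  ultimately show ?thesis unfolding srw_paths_def by (subst set_pmf_of_set) blast+
qed

lemma Yn_eq_sum:
  "Yn \<eta> \<beta> f n \<omega> = (\<Sum>p\<in>set_pmf (srw_paths n). pmf (srw_paths n) p * f (emb (srw_pos p n)) * exp (\<beta> * Hn \<eta> n p \<omega>))"
  unfolding Yn_def by (subst integral_measure_pmf[OF finite_set_srw_paths]) (auto simp: mult.assoc)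

lemma Hn_eq_remove:
  "j \<in> {1..n} \<Longrightarrow> Hn \<eta> n p \<omega> = (\<Sum>i\<in>{1..n} - {j}. \<eta> i (srw_pos p i) \<omega>) + \<eta> j (srw_pos p j) \<omega>"
  unfolding Hn_def by (simp add: sum.remove)

lemma sum_srw_weights_pos:
  assumes "\<And>x. 0 \<le> f x" and "measure_pmf.prob (srw_paths n) {xs. f (emb (srw_pos xs n)) > 0} \<noteq> 0"
  shows "0 < (\<Sum>p\<in>set_pmf (srw_paths n). pmf (srw_paths n) p * f (emb (srw_pos p n)))"
proof -
  obtain p where "p \<in> set_pmf (srw_paths n)" "0 < f (emb (srw_pos p n))"
    using assms(2) by (auto simp: measure_pmf_zero_iff)
  then show ?thesis
    using finite_set_srw_paths assms(1) by (intro sum_pos2[of _ p]) (auto simp: pmf_positive)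
qed

context
  fixes M :: "'a measure" and \<eta> :: "nat \<Rightarrow> int ^ 'd::finite \<Rightarrow> 'a \<Rightarrow> real" and \<beta> :: real
  assumes prob: "prob_space M" and measurable_eta: "\<And>i x. \<eta> i x \<in> borel_measurable M"
    and ident: "\<And>i x. distr M borel (\<eta> i x) = distr M borel (\<eta> 0 0)"
    and exp_moment: "integrable M (\<lambda>\<omega>. exp (\<beta> * \<bar>\<eta> 0 0 \<omega>\<bar>))"
begin

lemma integrable_exp_mult_eta: "\<bar>s\<bar> \<le> \<beta> \<Longrightarrow> integrable M (\<lambda>\<omega>. exp (s * \<eta> i x \<omega>))"
  using integrable_comp_eq_of_distr_eq[OF ident measurable_eta measurable_eta, of "\<lambda>t. exp (s * t)"]
    integrable_exp_mult_of_exp_abs[OF measurable_eta exp_moment]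
  by simp

lemma integrable_eta: "0 < \<beta> \<Longrightarrow> integrable M (\<eta> i x)"
  using integrable_comp_eq_of_distr_eq[OF ident measurable_eta measurable_eta, of "\<lambda>t. t"]
    integrable_of_exp_abs[OF measurable_eta exp_moment]
  by simp

lemma integral_exp_mult_eta: "\<bar>s\<bar> \<le> \<beta> \<Longrightarrow> (\<integral>\<omega>. exp (s * \<eta> i x \<omega>) \<partial>M) = exp (lam M \<eta> s)"
proof -
  assume s: "\<bar>s\<bar> \<le> \<beta>"
  interpret prob_space M by (rule prob)
  have "0 < (\<integral>\<omega>. exp (s * \<eta> 0 0 \<omega>) \<partial>M)"
    using integral_less_AE_space[OF integrable_zero integrable_exp_mult_eta[OF s, of 0 0]] by (simp add: emeasure_space_1)
  moreover have "(\<integral>\<omega>. exp (s * \<eta> i x \<omega>) \<partial>M) = (\<integral>\<omega>. exp (s * \<eta> 0 0 \<omega>) \<partial>M)"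
    by (rule integral_comp_eq_of_distr_eq[OF ident measurable_eta measurable_eta]) simp
  ultimately show ?thesis unfolding lam_def by simp
qed

end

lemma partition_layer_directed_polymer:
  fixes \<eta> :: "nat \<Rightarrow> int ^ 'd::finite \<Rightarrow> 'a \<Rightarrow> real"
  assumes "prob_space M" and measurable_eta: "\<And>i x. \<eta> i x \<in> borel_measurable M"
    and indep: "prob_space.indep_vars M (\<lambda>_. borel) (\<lambda>(i, x). \<eta> i x) UNIV"
    and ident: "\<And>i x. distr M borel (\<eta> i x) = distr M borel (\<eta> 0 0)"
    and "0 < \<beta>" and exp_moment: "integrable M (\<lambda>\<omega>. exp (\<beta> * \<bar>\<eta> 0 0 \<omega>\<bar>))"
    and f_nonneg: "\<And>x. 0 \<le> f x" and f_pos: "measure_pmf.prob (srw_paths n) {xs. f (emb (srw_pos xs n)) > 0} \<noteq> 0"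
    and "1 \<le> j"
  shows "partition_layer M (envF M \<eta> (j - 1)) (layer_sigma M \<eta> (- {j})) (layer_sigma M \<eta> {j}) (envF M \<eta> j)
    (set_pmf (srw_paths n)) (\<lambda>p. pmf (srw_paths n) p * f (emb (srw_pos p n)))
    (\<lambda>p \<omega>. \<beta> * (\<Sum>i\<in>{1..n} - {j}. \<eta> i (srw_pos p i) \<omega>)) (\<lambda>p \<omega>. \<beta> * \<eta> j (srw_pos p j) \<omega>)"
proof -
  note moments = integrable_exp_mult_eta[of M \<eta> \<beta>, OF assms(1) measurable_eta ident exp_moment]
    integrable_eta[of M \<eta> \<beta>, OF assms(1) measurable_eta ident exp_moment \<open>0 < \<beta>\<close>]
  show ?thesis
  proof (intro partition_layer.intro partition_layer_axioms.intro)
    show "indep_extension M (envF M \<eta> (j - 1)) (layer_sigma M \<eta> (- {j})) (layer_sigma M \<eta> {j}) (envF M \<eta> j)"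
      by (rule indep_extension_layer_sigma[OF assms(1) measurable_eta indep \<open>1 \<le> j\<close>])
    show "0 < sum (\<lambda>p. pmf (srw_paths n) p * f (emb (srw_pos p n))) (set_pmf (srw_paths n))"
      by (rule sum_srw_weights_pos[OF f_nonneg f_pos])
    show "(\<lambda>\<omega>. \<beta> * (\<Sum>i\<in>{1..n} - {j}. \<eta> i (srw_pos p i) \<omega>)) \<in> borel_measurable (layer_sigma M \<eta> (- {j}))" for p
      by (rule borel_measurable_times[OF borel_measurable_const borel_measurable_sum])
        (rule measurable_layer_sigma[of \<eta> M, OF measurable_eta], simp)
    show "(\<lambda>\<omega>. \<beta> * \<eta> j (srw_pos p j) \<omega>) \<in> borel_measurable (layer_sigma M \<eta> {j})" for p
      by (rule borel_measurable_times[OF borel_measurable_const measurable_layer_sigma[of \<eta> M, OF measurable_eta]]) simp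
    show "integrable M (\<lambda>\<omega>. exp (\<beta> * \<eta> j (srw_pos p j) \<omega>))" for p
      using moments(1)[of \<beta>] \<open>0 < \<beta>\<close> by simp
    show "integrable M (\<lambda>\<omega>. exp (- (\<beta> * \<eta> j (srw_pos p j) \<omega>)))" for p
      using moments(1)[of "- \<beta>"] \<open>0 < \<beta>\<close> by simp
    show "integrable M (\<lambda>\<omega>. \<beta> * (\<Sum>i\<in>{1..n} - {j}. \<eta> i (srw_pos p i) \<omega>))" for p
      by (intro Bochner_Integration.integrable_mult_right Bochner_Integration.integrable_sum moments(2))
    show "integrable M (\<lambda>\<omega>. \<beta> * \<eta> j (srw_pos p j) \<omega>)" for p
      by (intro Bochner_Integration.integrable_mult_right moments(2))
  qed (use finite_set_srw_paths f_nonneg in auto)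
qed

theorem lemma4p1:
  fixes M :: "'a measure"
    and \<eta> :: "nat \<Rightarrow> int ^ 'd::finite \<Rightarrow> 'a \<Rightarrow> real"
    and \<beta> :: real and n j :: nat and f :: "real ^ 'd \<Rightarrow> real"
  assumes "prob_space M"
    and rv: "\<And>m x. \<eta> m x \<in> borel_measurable M"
    and indep: "prob_space.indep_vars M (\<lambda>_. borel) (\<lambda>(m, x). \<eta> m x) UNIV"
    and ident: "\<And>m x. distr M borel (\<eta> m x) = distr M borel (\<eta> 0 0)"
    and nonconst: "\<not> (\<exists>c. AE \<omega> in M. \<eta> 0 0 \<omega> = c)"
    and "\<beta> > 0"
    and expmom: "integrable M (\<lambda>\<omega>. exp (\<beta> * \<bar>\<eta> 0 0 \<omega>\<bar>))"
    and "n \<ge> 1"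
    and fbdd: "\<exists>B. \<forall>x. f x \<le> B"
    and fnn: "\<And>x. 0 \<le> f x"
    and fpos: "measure_pmf.prob (srw_paths n) {xs. f (emb (srw_pos xs n)) > 0} \<noteq> 0"
    and "1 \<le> j" and "j \<le> n"
  shows "AE \<omega> in M.
     nn_cond_exp M (envF M \<eta> (j - 1))
       (\<lambda>\<omega>. ennreal (exp \<bar>real_cond_exp M (envF M \<eta> j) (\<lambda>\<omega>. ln (Yn \<eta> \<beta> f n \<omega>)) \<omega>
                         - real_cond_exp M (envF M \<eta> (j - 1)) (\<lambda>\<omega>. ln (Yn \<eta> \<beta> f n \<omega>)) \<omega>\<bar>)) \<omega>
     \<le> ennreal (2 * exp (lam M \<eta> \<beta> + lam M \<eta> (-\<beta>)))"
proof -
  interpret partition_layer M "envF M \<eta> (j - 1)" "layer_sigma M \<eta> (- {j})" "layer_sigma M \<eta> {j}"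
      "envF M \<eta> j" "set_pmf (srw_paths n)" "\<lambda>p. pmf (srw_paths n) p * f (emb (srw_pos p n))"
      "\<lambda>p \<omega>. \<beta> * (\<Sum>i\<in>{1..n} - {j}. \<eta> i (srw_pos p i) \<omega>)" "\<lambda>p \<omega>. \<beta> * \<eta> j (srw_pos p j) \<omega>"
    by (rule partition_layer_directed_polymer[OF assms(1) rv indep ident \<open>\<beta> > 0\<close> expmom fnn fpos \<open>1 \<le> j\<close>])
  have "Yn \<eta> \<beta> f n \<omega> = partition_function \<omega>" for \<omega>
    unfolding partition_function_def Yn_eq_sum using \<open>1 \<le> j\<close> \<open>j \<le> n\<close>
    by (simp add: Hn_eq_remove distrib_left)
  moreover have "(\<integral>\<omega>. exp (\<beta> * \<eta> j (srw_pos p j) \<omega>) \<partial>M) = exp (lam M \<eta> \<beta>)"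
    "(\<integral>\<omega>. exp (- (\<beta> * \<eta> j (srw_pos p j) \<omega>)) \<partial>M) = exp (lam M \<eta> (- \<beta>))" for p
    using integral_exp_mult_eta[of M \<eta> \<beta>, OF assms(1) rv ident expmom, of \<beta>]
      integral_exp_mult_eta[of M \<eta> \<beta>, OF assms(1) rv ident expmom, of "- \<beta>"] \<open>\<beta> > 0\<close>
    by simp_all
  ultimately show ?thesis
    using nn_cond_exp_exp_abs_ln_partition_function_increment_le[of "exp (lam M \<eta> \<beta>)" "exp (lam M \<eta> (- \<beta>))"]
    by (simp add: exp_add mult.assoc)
qed

end
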